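(* Let $\mathcal{A}\subseteq\{0,1\}^d$ be a path set with $\mathrm{rank}(\mathcal{A})=d_0<d$, let $\mathcal{B}\subseteq\mathcal{A}$ be a basis of $\mathcal{A}$ consisting of $d_0$ paths, and let $S=\max_{\mathbf{a}\in\mathcal{A},\,i\in[d_0]}|\nu_{\mathbf{a},i}|$, where $\mathbf{a}=\mathcal{B}\boldsymbol{\nu}_{\mathbf{a}}$. Suppose for $m$ epochs each path of $\mathcal{B}$ is routed once per epoch, let $\mathcal{D}_m$ be the matrix whose rows are the $md_0$ chosen paths, $\mathbf{r}_m$ the vector of observed end-to-end delays, and $\hat{\boldsymbol{\mu}}_m=(\mathcal{D}_m^{\top}\mathcal{D}_m)^{\dagger}\mathcal{D}_m^{\top}\mathbf{r}_m$, where $\dagger$ denotes the Moore–Penrose pseudo-inverse. Then for every $\delta\in(0,1)$, $$\Pr\left(\exists\,\mathbf{a}\in\mathcal{A}:\ \left|\langle \mathbf{a},\boldsymbol{\mu}\rangle-\langle \mathbf{a},\hat{\boldsymbol{\mu}}_m\rangle\right|\geq SR\sqrt{\frac{32\ln (6)d_0^2+32d_0\ln{\delta^{-1}}}{m}}\right)\leq\delta.$$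
   Context: Model: a directed acyclic network with $d$ links; paths $\mathbf{a}\in\{0,1\}^d$ with $a_j=1$ iff the path uses link $j$; unknown fixed mean link-delay vector $\boldsymbol{\mu}\in\mathbb{R}^d$. Routing through $\mathbf{a}_{I_t}$ in round $t$ yields only the end-to-end delay $L_{t,I_t}=\langle\mathbf{a}_{I_t},\boldsymbol{\mu}\rangle+\eta_t$, where $\eta_t$ is conditionally $R$-sub-Gaussian ($R\ge0$ known): $\mathbb{E}[\exp(\alpha\eta_t)\mid \mathbf{a}_{I_1},\ldots,\mathbf{a}_{I_{t-1}},\eta_1,\ldots,\eta_{t-1}]\le\exp(\alpha^2R^2/2)$ for all real $\alpha$, and $\mathbb{E}[\eta_t\mid\text{same}]=0$. A basis $\mathcal{B}$ of $\mathcal{A}$ is a $d\times d_0$ matrix of linearly independent columns from $\mathcal{A}$ such that every $\mathbf{a}\in\mathcal{A}$ equals $\mathcal{B}\boldsymbol{\nu}_{\mathbf{a}}$ for a (unique) $\boldsymbol{\nu}_{\mathbf{a}}\in\mathbb{R}^{d_0}$. *)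

theory Defs
  imports "HOL-Probability.Probability" "Jordan_Normal_Form.Matrix"
begin

definition penrose_conds :: "real mat \<Rightarrow> real mat \<Rightarrow> bool" where
  "penrose_conds A X \<longleftrightarrow>
     X \<in> carrier_mat (dim_col A) (dim_row A) \<and>
     A * X * A = A \<and> X * A * X = X \<and>
     transpose_mat (A * X) = A * X \<and> transpose_mat (X * A) = X * A"

definition pinv :: "real mat \<Rightarrow> real mat" where
  "pinv A = (THE X. penrose_conds A X)"

definition path_vecs :: "nat \<Rightarrow> real vec set" where
  "path_vecs d = {a \<in> carrier_vec d. \<forall>i<d. a $ i = 0 \<or> a $ i = 1}"

definition is_basis_of :: "nat \<Rightarrow> nat \<Rightarrow> real mat \<Rightarrow> real vec set \<Rightarrow> bool" where
  "is_basis_of d d0 B A \<longleftrightarrow>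
     B \<in> carrier_mat d d0 \<and> (\<forall>j<d0. col B j \<in> A) \<and>
     (\<forall>\<nu>\<in>carrier_vec d0. mult_mat_vec B \<nu> = 0\<^sub>v d \<longrightarrow> \<nu> = 0\<^sub>v d0) \<and>
     (\<forall>a\<in>A. \<exists>\<nu>\<in>carrier_vec d0. a = mult_mat_vec B \<nu>)"

definition coeffs :: "nat \<Rightarrow> real mat \<Rightarrow> real vec \<Rightarrow> real vec" where
  "coeffs d0 B a = (THE \<nu>. \<nu> \<in> carrier_vec d0 \<and> a = mult_mat_vec B \<nu>)"

definition coeff_bound :: "nat \<Rightarrow> real mat \<Rightarrow> real vec set \<Rightarrow> real" where
  "coeff_bound d0 B A = Max {\<bar>coeffs d0 B a $ i\<bar> | a i. a \<in> A \<and> i < d0}"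

definition noise_filt :: "'w measure \<Rightarrow> (nat \<Rightarrow> 'w \<Rightarrow> real) \<Rightarrow> nat \<Rightarrow> 'w measure" where
  "noise_filt M \<eta> t = sigma (space M)
     (\<Union>s<t. {\<eta> s -` U \<inter> space M | U. U \<in> sets borel})"

text \<open>Schedule: in every epoch k<m, positions k*d0 .. (k+1)*d0-1 route each basis
  path exactly once (sigma t = index of the basis column routed at time t).\<close>
definition epoch_schedule :: "nat \<Rightarrow> nat \<Rightarrow> (nat \<Rightarrow> nat) \<Rightarrow> bool" where
  "epoch_schedule m d0 \<sigma> \<longleftrightarrow>
     (\<forall>k<m. bij_betw \<sigma> {k*d0..<(k+1)*d0} {..<d0})"

definition design_mat :: "nat \<Rightarrow> nat \<Rightarrow> nat \<Rightarrow> real mat \<Rightarrow> (nat \<Rightarrow> nat) \<Rightarrow> real mat" where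
  "design_mat d m d0 B \<sigma> = mat_of_rows d (map (\<lambda>t. col B (\<sigma> t)) [0..<m*d0])"

definition delay_vec :: "nat \<Rightarrow> nat \<Rightarrow> real mat \<Rightarrow> (nat \<Rightarrow> nat) \<Rightarrow> real vec
     \<Rightarrow> (nat \<Rightarrow> real) \<Rightarrow> real vec" where
  "delay_vec m d0 B \<sigma> \<mu> e = vec (m*d0) (\<lambda>t. scalar_prod (col B (\<sigma> t)) \<mu> + e t)"

definition ls_estimate :: "real mat \<Rightarrow> real vec \<Rightarrow> real vec" where
  "ls_estimate D r = mult_mat_vec (pinv (transpose_mat D * D)) (mult_mat_vec (transpose_mat D) r)"

end

theory Submission
  imports Defs "Jordan_Normal_Form.Determinant"
begin

(* Each epoch routes every basis path once, so D^T D = m B B^T, whose pseudo-inverse is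
   m^-1 B (B^T B)^-2 B^T.  Hence for a path a = B nu the estimation error is exactly
   -(1/m) sum_t nu_(sigma t) eta_t, and grouping the rounds by the basis path they use bounds
   its modulus by (S/m) sum_j |xi_j|, where xi_j is the total noise collected on basis path j.
   Now sum_j |xi_j| is the largest of the 2^d0 signed sums sum_t s_(sigma t) eta_t with
   s in {-1,1}^d0.  Each of them is a sum of conditionally R-sub-Gaussian terms, so peeling off
   one conditional moment generating function at a time and applying Chernoff's bound gives
   the tail exp (-tau^2 / (2 R^2 m d0)).  A union bound over the sign vectors and the choice
   of tau finish the proof. *)

section \<open>Matrix algebra and pseudo-inverses\<close>

(* Carrier-free variants of library lemmas: the simplifier computes the dimensions of
   intermediate products itself, so long products can be reassociated by simp. *)
lemma assoc_mult_mat_dim: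
  "dim_col A = dim_row B \<Longrightarrow> dim_col B = dim_row C \<Longrightarrow> A * B * C = A * (B * C)"
  for A B C :: "'a :: semiring_0 mat"
  by (rule assoc_mult_mat[of A "dim_row A" "dim_col A" B "dim_col B" C "dim_col C"]) auto

lemma assoc_mult_mat_vec_dim:
  "dim_col A = dim_row B \<Longrightarrow> dim_col B = dim_vec v \<Longrightarrow> A * B *\<^sub>v v = A *\<^sub>v (B *\<^sub>v v)"
  for A B :: "'a :: semiring_0 mat"
  by (rule assoc_mult_mat_vec[of A "dim_row A" "dim_col A" B "dim_col B"]) auto

lemma transpose_mult_dim:
  "dim_col A = dim_row B \<Longrightarrow> transpose_mat (A * B) = transpose_mat B * transpose_mat A"
  for A B :: "'a :: comm_semiring_0 mat"
  by (rule transpose_mult[of A "dim_row A" "dim_col A" B "dim_col B"]) auto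

lemma smult_mult_smult_mat:
  "dim_col A = dim_row B \<Longrightarrow> (a \<cdot>\<^sub>m A) * (b \<cdot>\<^sub>m B) = (a * b) \<cdot>\<^sub>m (A * B)"
  for A B :: "'a :: comm_ring mat"
  by (intro eq_matI) (auto simp: scalar_prod_def sum_distrib_left ac_simps)

lemma mult_smult_mat_dim:
  "dim_col A = dim_row B \<Longrightarrow> A * (k \<cdot>\<^sub>m B) = k \<cdot>\<^sub>m (A * B)"
  for A B :: "'a :: comm_ring mat"
  by (intro eq_matI) (auto simp: scalar_prod_def sum_distrib_left ac_simps)

lemma smult_mat_mult_vec:
  "dim_vec v = dim_col A \<Longrightarrow> (k \<cdot>\<^sub>m A) *\<^sub>v v = k \<cdot>\<^sub>v (A *\<^sub>v v)"
  for A :: "'a :: comm_ring mat"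
  by (intro eq_vecI) (auto simp: scalar_prod_def sum_distrib_left ac_simps intro!: sum.cong)

lemma scalar_prod_mult_mat_vec:
  fixes B :: "'a :: comm_semiring_0 mat"
  assumes "B \<in> carrier_mat nr nc" and "v \<in> carrier_vec nc" and "w \<in> carrier_vec nr"
  shows "(B *\<^sub>v v) \<bullet> w = v \<bullet> (transpose_mat B *\<^sub>v w)"
  using transpose_vec_mult_scalar[of "transpose_mat B" nc nr w v] assms by simp

lemma penrose_conds_unique:
  assumes "penrose_conds A X" and "penrose_conds A Y"
  shows "X = Y"
proof -
  from assms have dims: "dim_row X = dim_col A" "dim_col X = dim_row A"
      "dim_row Y = dim_col A" "dim_col Y = dim_row A"
    and X1: "A * X * A = A" and X2: "X * A * X = X"
    and X3: "transpose_mat (A * X) = A * X" and X4: "transpose_mat (X * A) = X * A"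
    and Y1: "A * Y * A = A" and Y2: "Y * A * Y = Y"
    and Y3: "transpose_mat (A * Y) = A * Y" and Y4: "transpose_mat (Y * A) = Y * A"
    by (auto simp: penrose_conds_def)
  have XAX: "X * (A * (X * Z)) = X * Z" if "dim_row Z = dim_row A" for Z
    using X2 dims that by (metis assoc_mult_mat_dim index_mult_mat(2,3))
  have YAY: "Y * (A * Y) = Y"
    using Y2 dims by (simp add: assoc_mult_mat_dim)
  have "X = X * transpose_mat (A * X)"
    using X2 X3 dims by (simp add: assoc_mult_mat_dim)
  also have "\<dots> = X * transpose_mat (A * Y * A * X)"
    using Y1 by simp
  also have "\<dots> = X * (transpose_mat (A * X) * transpose_mat (A * Y))"
    using dims by (simp add: assoc_mult_mat_dim transpose_mult_dim)
  also have "\<dots> = X * A * Y"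
    using X3 Y3 dims by (simp add: assoc_mult_mat_dim XAX)
  finally have X_eq: "X = X * A * Y" .
  have "Y = transpose_mat (Y * A) * Y"
    using Y2 Y4 dims by (simp add: assoc_mult_mat_dim)
  also have "\<dots> = transpose_mat (Y * A * X * A) * Y"
    using X1 dims by (simp add: assoc_mult_mat_dim)
  also have "\<dots> = transpose_mat (X * A) * transpose_mat (Y * A) * Y"
    using dims by (simp add: assoc_mult_mat_dim transpose_mult_dim)
  also have "\<dots> = X * A * Y"
    using X4 Y4 dims by (simp add: assoc_mult_mat_dim YAY)
  finally show ?thesis using X_eq by simp
qed

lemma pinv_eqI: "penrose_conds A X \<Longrightarrow> pinv A = X"
  unfolding pinv_def by (blast intro: penrose_conds_unique)

lemma penrose_conds_smult:
  assumes "penrose_conds A X" and "k \<noteq> 0"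
  shows "penrose_conds (k \<cdot>\<^sub>m A) ((1 / k) \<cdot>\<^sub>m X)"
proof -
  from assms(1) have dims: "dim_row X = dim_col A" "dim_col X = dim_row A"
    by (auto simp: penrose_conds_def)
  have AX: "(k \<cdot>\<^sub>m A) * ((1 / k) \<cdot>\<^sub>m X) = A * X"
    and XA: "((1 / k) \<cdot>\<^sub>m X) * (k \<cdot>\<^sub>m A) = X * A"
    using dims assms(2) by (auto simp: smult_mult_smult_mat intro!: eq_matI)
  show ?thesis
    using assms dims unfolding penrose_conds_def AX XA by (auto simp: mult_smult_mat_dim)
qed

section \<open>Matrices of full column rank\<close>

locale full_column_rank =
  fixes B :: "real mat" and d k :: nat
  assumes carrier: "B \<in> carrier_mat d k"
    and inj: "\<forall>v\<in>carrier_vec k. B *\<^sub>v v = 0\<^sub>v d \<longrightarrow> v = 0\<^sub>v k"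
begin

lemma gram_mat_unit: "transpose_mat B * B \<in> Units (ring_mat TYPE(real) k ())"
proof (rule det_non_zero_imp_unit)
  show W: "transpose_mat B * B \<in> carrier_mat k k"
    using carrier by simp
  show "det (transpose_mat B * B) \<noteq> 0"
  proof
    assume "det (transpose_mat B * B) = 0"
    then obtain v where v: "v \<in> carrier_vec k" "v \<noteq> 0\<^sub>v k" "(transpose_mat B * B) *\<^sub>v v = 0\<^sub>v k"
      using det_0_iff_vec_prod_zero[OF W] by auto
    have "(B *\<^sub>v v) \<bullet> (B *\<^sub>v v) = v \<bullet> ((transpose_mat B * B) *\<^sub>v v)"
      using carrier v(1) by (simp add: scalar_prod_mult_mat_vec[OF carrier])
    then have "B *\<^sub>v v = 0\<^sub>v d"
      using conjugate_square_eq_0_vec[of "B *\<^sub>v v" d] carrier v by simp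
    then show False
      using inj v by auto
  qed
qed

definition gram_inv :: "real mat" where
  "gram_inv = the (mat_inverse (transpose_mat B * B))"

lemma gram_inv:
  "gram_inv \<in> carrier_mat k k" "transpose_mat B * B * gram_inv = 1\<^sub>m k"
  "gram_inv * (transpose_mat B * B) = 1\<^sub>m k"
proof -
  have W: "transpose_mat B * B \<in> carrier_mat k k"
    using carrier by simp
  then obtain V where "mat_inverse (transpose_mat B * B) = Some V"
    using mat_inverse(1)[OF W] gram_mat_unit by fastforce
  then show "gram_inv \<in> carrier_mat k k" "transpose_mat B * B * gram_inv = 1\<^sub>m k"
    "gram_inv * (transpose_mat B * B) = 1\<^sub>m k"
    using mat_inverse(2)[OF W] unfolding gram_inv_def by auto
qed

lemma dim_gram_inv [simp]: "dim_row gram_inv = k" "dim_col gram_inv = k"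
  using gram_inv(1) by auto

lemma dim_B [simp]: "dim_row B = d" "dim_col B = k"
  using carrier by auto

lemma gram_inv_cancel [simp]:
  "transpose_mat B * (B * gram_inv) = 1\<^sub>m k"
  "gram_inv * (transpose_mat B * B) = 1\<^sub>m k"
  "dim_row X = k \<Longrightarrow> transpose_mat B * (B * (gram_inv * X)) = X"
  "dim_row X = k \<Longrightarrow> gram_inv * (transpose_mat B * (B * X)) = X"
  using gram_inv by (simp_all flip: assoc_mult_mat_dim)

lemma gram_inv_symmetric: "transpose_mat gram_inv = gram_inv"
proof -
  have "transpose_mat gram_inv * (transpose_mat B * B) = transpose_mat (transpose_mat B * B * gram_inv)"
    by (simp add: transpose_mult_dim)
  also have "\<dots> = 1\<^sub>m k"
    by (simp only: gram_inv(2) transpose_one)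
  finally have "transpose_mat gram_inv * (transpose_mat B * B) * gram_inv = gram_inv"
    by simp
  then show ?thesis
    by (simp add: assoc_mult_mat_dim)
qed

lemma penrose_conds_gram:
  "penrose_conds (B * transpose_mat B) (B * gram_inv * gram_inv * transpose_mat B)"
  unfolding penrose_conds_def
  by (auto simp: assoc_mult_mat_dim transpose_mult_dim gram_inv_symmetric)

lemma coeffs_mult_mat_vec:
  assumes v: "v \<in> carrier_vec k"
  shows "coeffs k B (B *\<^sub>v v) = v"
  unfolding coeffs_def
proof (rule the_equality)
  fix w assume w: "w \<in> carrier_vec k \<and> B *\<^sub>v v = B *\<^sub>v w"
  then have "B *\<^sub>v (w - v) = 0\<^sub>v d"
    using v carrier by (simp add: mult_minus_distrib_mat_vec)
  then have "w - v = 0\<^sub>v k"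
    using inj w v by simp
  then have "(w - v) $ i = 0" if "i < k" for i
    using that by simp
  then show "w = v"
    using w v by (intro eq_vecI) auto
qed (use v in simp)

end

lemma is_basis_of_full_column_rank: "is_basis_of d d0 B A \<Longrightarrow> full_column_rank B d d0"
  by (simp add: is_basis_of_def full_column_rank_def)

lemma is_basis_of_coeffs:
  assumes "is_basis_of d d0 B A" and "a \<in> A"
  shows "coeffs d0 B a \<in> carrier_vec d0" and "B *\<^sub>v coeffs d0 B a = a"
proof -
  interpret full_column_rank B d d0
    using assms(1) by (rule is_basis_of_full_column_rank)
  obtain v where "v \<in> carrier_vec d0" "a = B *\<^sub>v v"
    using assms unfolding is_basis_of_def by blast
  then show "coeffs d0 B a \<in> carrier_vec d0" "B *\<^sub>v coeffs d0 B a = a"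
    by (simp_all add: coeffs_mult_mat_vec)
qed

lemma abs_coeffs_le_coeff_bound:
  assumes "finite A" and "a \<in> A" and "i < d0"
  shows "\<bar>coeffs d0 B a $ i\<bar> \<le> coeff_bound d0 B A"
proof -
  have "{\<bar>coeffs d0 B a $ i\<bar> | a i. a \<in> A \<and> i < d0}
      = (\<lambda>(a, i). \<bar>coeffs d0 B a $ i\<bar>) ` (A \<times> {..<d0})"
    by auto
  then show ?thesis
    unfolding coeff_bound_def using assms by (auto intro!: Max_ge)
qed

lemma one_le_coeff_bound:
  assumes "is_basis_of d d0 B A" and "finite A" and "0 < d0"
  shows "1 \<le> coeff_bound d0 B A"
proof -
  interpret full_column_rank B d d0
    using assms(1) by (rule is_basis_of_full_column_rank)
  have "col B 0 \<in> A"
    using assms unfolding is_basis_of_def by blast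
  have "col B 0 = B *\<^sub>v unit_vec d0 0"
    using carrier assms(3) by (intro eq_vecI) auto
  then have "coeffs d0 B (col B 0) $ 0 = 1"
    using assms(3) by (simp add: coeffs_mult_mat_vec)
  moreover have "\<bar>coeffs d0 B (col B 0) $ 0\<bar> \<le> coeff_bound d0 B A"
    using assms(2) \<open>col B 0 \<in> A\<close> assms(3) by (rule abs_coeffs_le_coeff_bound)
  ultimately show ?thesis
    by simp
qed

lemma finite_path_vecs: "finite (path_vecs d)"
proof (rule finite_subset)
  show "path_vecs d \<subseteq> (\<lambda>f. vec d f) ` ({..<d} \<rightarrow>\<^sub>E {0, 1})"
  proof
    fix a assume a: "a \<in> path_vecs d"
    then have "a = vec d (restrict (\<lambda>i. a $ i) {..<d})"
      by (intro eq_vecI) (auto simp: path_vecs_def)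
    moreover have "restrict (\<lambda>i. a $ i) {..<d} \<in> {..<d} \<rightarrow>\<^sub>E {0, 1}"
      using a by (auto simp: path_vecs_def)
    ultimately show "a \<in> (\<lambda>f. vec d f) ` ({..<d} \<rightarrow>\<^sub>E {0, 1})"
      by blast
  qed
qed (simp add: finite_PiE)

section \<open>The least-squares error on an epoch schedule\<close>

lemma epoch_schedule_less:
  assumes "epoch_schedule m k \<sigma>" and "t < m * k"
  shows "\<sigma> t < k"
proof -
  have k: "0 < k"
    using assms(2) by (cases k) auto
  have "t div k < m"
    using assms(2) by (simp add: less_mult_imp_div_less)
  then have "bij_betw \<sigma> {t div k * k..<(t div k + 1) * k} {..<k}"
    using assms(1) by (simp add: epoch_schedule_def)
  moreover have "t \<in> {t div k * k..<(t div k + 1) * k}"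
    using k by (auto simp: dividend_less_div_times)
  ultimately show ?thesis
    by (auto dest: bij_betwE)
qed

lemma sum_epoch_schedule:
  fixes f :: "nat \<Rightarrow> 'a :: comm_semiring_1"
  assumes "epoch_schedule m k \<sigma>"
  shows "(\<Sum>t<m * k. f (\<sigma> t)) = of_nat m * (\<Sum>j<k. f j)"
  using assms
proof (induction m)
  case (Suc m)
  then have IH: "(\<Sum>t<m * k. f (\<sigma> t)) = of_nat m * (\<Sum>j<k. f j)"
    by (simp add: epoch_schedule_def)
  have "bij_betw \<sigma> {m * k..<(m + 1) * k} {..<k}"
    using Suc.prems by (simp add: epoch_schedule_def)
  then have "(\<Sum>t\<in>{m * k..<(m + 1) * k}. f (\<sigma> t)) = (\<Sum>j<k. f j)"
    by (rule sum.reindex_bij_betw)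
  moreover have "(\<Sum>t<Suc m * k. f (\<sigma> t))
      = (\<Sum>t<m * k. f (\<sigma> t)) + (\<Sum>t\<in>{m * k..<(m + 1) * k}. f (\<sigma> t))"
    using sum.atLeastLessThan_concat[of 0 "m * k" "Suc m * k" "\<lambda>t. f (\<sigma> t)"]
    by (simp add: atLeast0LessThan)
  ultimately show ?case
    using IH by (simp add: algebra_simps)
qed simp

lemma sum_mult_group_by:
  fixes f e :: "nat \<Rightarrow> 'a :: comm_semiring_0"
  assumes "\<And>t. t < n \<Longrightarrow> \<sigma> t < k"
  shows "(\<Sum>t<n. f (\<sigma> t) * e t) = (\<Sum>j<k. f j * (\<Sum>t | t < n \<and> \<sigma> t = j. e t))"
proof -
  have "(\<Sum>t<n. f (\<sigma> t) * e t) = (\<Sum>j<k. \<Sum>t | t \<in> {..<n} \<and> \<sigma> t = j. f (\<sigma> t) * e t)"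
    by (rule sum.group[symmetric]) (use assms in auto)
  then show ?thesis
    by (simp add: sum_distrib_left)
qed

lemma abs_sum_le_sum_abs_group:
  fixes \<nu> e :: "nat \<Rightarrow> real"
  assumes "\<And>t. t < n \<Longrightarrow> \<sigma> t < k" and "\<And>j. j < k \<Longrightarrow> \<bar>\<nu> j\<bar> \<le> S"
  shows "\<bar>\<Sum>t<n. \<nu> (\<sigma> t) * e t\<bar> \<le> S * (\<Sum>j<k. \<bar>\<Sum>t | t < n \<and> \<sigma> t = j. e t\<bar>)"
proof -
  have "\<bar>\<Sum>t<n. \<nu> (\<sigma> t) * e t\<bar> = \<bar>\<Sum>j<k. \<nu> j * (\<Sum>t | t < n \<and> \<sigma> t = j. e t)\<bar>"
    using sum_mult_group_by[OF assms(1), where f = \<nu> and e = e] by simp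
  also have "\<dots> \<le> (\<Sum>j<k. \<bar>\<nu> j\<bar> * \<bar>\<Sum>t | t < n \<and> \<sigma> t = j. e t\<bar>)"
    by (rule order_trans[OF sum_abs]) (simp add: abs_mult)
  also have "\<dots> \<le> S * (\<Sum>j<k. \<bar>\<Sum>t | t < n \<and> \<sigma> t = j. e t\<bar>)"
    unfolding sum_distrib_left using assms(2) by (intro sum_mono mult_right_mono) auto
  finally show ?thesis .
qed

lemma sum_abs_group_eq_sign_sum:
  fixes e :: "nat \<Rightarrow> real" and \<sigma> :: "nat \<Rightarrow> nat"
  assumes "\<And>t. t < n \<Longrightarrow> \<sigma> t < k"
  obtains s where "s \<in> {..<k} \<rightarrow>\<^sub>E {-1, 1}"
    and "(\<Sum>j<k. \<bar>\<Sum>t | t < n \<and> \<sigma> t = j. e t\<bar>) = (\<Sum>t<n. s (\<sigma> t) * e t)"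
proof
  define \<xi> where "\<xi> j = (\<Sum>t | t < n \<and> \<sigma> t = j. e t)" for j
  define s where "s = restrict (\<lambda>j. if 0 \<le> \<xi> j then 1 else - 1 :: real) {..<k}"
  show "s \<in> {..<k} \<rightarrow>\<^sub>E {-1, 1}"
    unfolding s_def by auto
  have "(\<Sum>j<k. \<bar>\<xi> j\<bar>) = (\<Sum>j<k. s j * \<xi> j)"
    unfolding s_def by (intro sum.cong) auto
  also have "\<dots> = (\<Sum>t<n. s (\<sigma> t) * e t)"
    unfolding \<xi>_def using sum_mult_group_by[OF assms, where f = s and e = e] by simp
  finally show "(\<Sum>j<k. \<bar>\<Sum>t | t < n \<and> \<sigma> t = j. e t\<bar>) = (\<Sum>t<n. s (\<sigma> t) * e t)"
    unfolding \<xi>_def .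
qed

locale epoch_design = full_column_rank B d d0
  for B :: "real mat" and d d0 :: nat +
  fixes m :: nat and \<sigma> :: "nat \<Rightarrow> nat"
  assumes schedule: "epoch_schedule m d0 \<sigma>"
    and m_pos: "0 < m"
begin

abbreviation D :: "real mat" where "D \<equiv> design_mat d m d0 B \<sigma>"

lemma design_mat_carrier: "D \<in> carrier_mat (m * d0) d"
  unfolding design_mat_def by (simp add: mat_of_rows_def)

lemma design_mat_index: "t < m * d0 \<Longrightarrow> i < d \<Longrightarrow> D $$ (t, i) = B $$ (i, \<sigma> t)"
  unfolding design_mat_def using carrier epoch_schedule_less[OF schedule]
  by (simp add: mat_of_rows_def)

lemma gram_design_mat: "transpose_mat D * D = real m \<cdot>\<^sub>m (B * transpose_mat B)"
proof (rule eq_matI)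
  fix i j assume "i < dim_row (real m \<cdot>\<^sub>m (B * transpose_mat B))"
    and "j < dim_col (real m \<cdot>\<^sub>m (B * transpose_mat B))"
  then have ij: "i < d" "j < d"
    by auto
  have "(transpose_mat D * D) $$ (i, j) = (\<Sum>t<m * d0. B $$ (i, \<sigma> t) * B $$ (j, \<sigma> t))"
    using design_mat_carrier ij by (simp add: scalar_prod_def atLeast0LessThan design_mat_index)
  also have "\<dots> = real m * (\<Sum>l<d0. B $$ (i, l) * B $$ (j, l))"
    by (rule sum_epoch_schedule[OF schedule])
  finally show "(transpose_mat D * D) $$ (i, j) = (real m \<cdot>\<^sub>m (B * transpose_mat B)) $$ (i, j)"
    using ij by (simp add: scalar_prod_def atLeast0LessThan)
qed (use design_mat_carrier in auto)

lemma transpose_design_mat_mult_vec: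
  "transpose_mat D *\<^sub>v vec (m * d0) e = B *\<^sub>v vec d0 (\<lambda>j. \<Sum>t | t < m * d0 \<and> \<sigma> t = j. e t)"
proof (rule eq_vecI)
  fix i assume "i < dim_vec (B *\<^sub>v vec d0 (\<lambda>j. \<Sum>t | t < m * d0 \<and> \<sigma> t = j. e t))"
  then have i: "i < d"
    by simp
  have "(transpose_mat D *\<^sub>v vec (m * d0) e) $ i = (\<Sum>t<m * d0. B $$ (i, \<sigma> t) * e t)"
    using design_mat_carrier i by (simp add: scalar_prod_def atLeast0LessThan design_mat_index)
  also have "\<dots> = (\<Sum>j<d0. B $$ (i, j) * (\<Sum>t | t < m * d0 \<and> \<sigma> t = j. e t))"
    by (rule sum_mult_group_by) (rule epoch_schedule_less[OF schedule])
  finally show "(transpose_mat D *\<^sub>v vec (m * d0) e) $ i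
      = (B *\<^sub>v vec d0 (\<lambda>j. \<Sum>t | t < m * d0 \<and> \<sigma> t = j. e t)) $ i"
    using i by (simp add: scalar_prod_def atLeast0LessThan)
qed (use design_mat_carrier in simp)

lemma delay_vec_eq: "\<mu> \<in> carrier_vec d \<Longrightarrow> delay_vec m d0 B \<sigma> \<mu> e = D *\<^sub>v \<mu> + vec (m * d0) e"
  using design_mat_carrier
  by (intro eq_vecI) (auto simp: delay_vec_def design_mat_def mat_of_rows_def scalar_prod_def)

lemma pinv_gram_design_mat:
  "pinv (transpose_mat D * D) = (1 / real m) \<cdot>\<^sub>m (B * gram_inv * gram_inv * transpose_mat B)"
  unfolding gram_design_mat using m_pos
  by (intro pinv_eqI penrose_conds_smult penrose_conds_gram) simp

lemma ls_estimate_carrier: "ls_estimate D r \<in> carrier_vec d"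
  unfolding ls_estimate_def pinv_gram_design_mat by (auto intro!: carrier_vecI)

lemma transpose_mult_ls_estimate:
  assumes \<mu>: "\<mu> \<in> carrier_vec d"
  shows "transpose_mat B *\<^sub>v ls_estimate D (delay_vec m d0 B \<sigma> \<mu> e)
    = transpose_mat B *\<^sub>v \<mu> + (1 / real m) \<cdot>\<^sub>v vec d0 (\<lambda>j. \<Sum>t | t < m * d0 \<and> \<sigma> t = j. e t)"
proof -
  define Y where "Y = B * gram_inv * gram_inv * transpose_mat B"
  define \<xi> where "\<xi> = vec d0 (\<lambda>j. \<Sum>t | t < m * d0 \<and> \<sigma> t = j. e t)"
  have carriers: "Y \<in> carrier_mat d d" "transpose_mat B \<in> carrier_mat d0 d" "\<xi> \<in> carrier_vec d0"
    "B * transpose_mat B \<in> carrier_mat d d" "transpose_mat D \<in> carrier_mat d (m * d0)"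
    unfolding Y_def \<xi>_def using design_mat_carrier by (auto intro!: carrier_matI)
  have BtYG: "transpose_mat B * Y * (B * transpose_mat B) = transpose_mat B"
    and BtYB: "transpose_mat B * Y * B = 1\<^sub>m d0"
    unfolding Y_def by (simp_all add: assoc_mult_mat_dim)
  have "transpose_mat D *\<^sub>v delay_vec m d0 B \<sigma> \<mu> e
      = real m \<cdot>\<^sub>v ((B * transpose_mat B) *\<^sub>v \<mu>) + B *\<^sub>v \<xi>"
    using design_mat_carrier carriers \<mu>
    by (simp add: delay_vec_eq mult_add_distrib_mat_vec[of _ d "m * d0"]
        assoc_mult_mat_vec[of _ d "m * d0" _ d, symmetric] gram_design_mat smult_mat_mult_vec
        transpose_design_mat_mult_vec \<xi>_def)
  then have "transpose_mat B *\<^sub>v ls_estimate D (delay_vec m d0 B \<sigma> \<mu> e)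
      = (1 / real m) \<cdot>\<^sub>v (real m \<cdot>\<^sub>v ((transpose_mat B * Y * (B * transpose_mat B)) *\<^sub>v \<mu>)
          + (transpose_mat B * Y * B) *\<^sub>v \<xi>)"
    unfolding ls_estimate_def pinv_gram_design_mat Y_def[symmetric] using carriers \<mu>
    by (simp add: smult_mat_mult_vec mult_add_distrib_mat_vec mult_mat_vec assoc_mult_mat_vec_dim)
  also have "\<dots> = transpose_mat B *\<^sub>v \<mu> + (1 / real m) \<cdot>\<^sub>v \<xi>"
    using carriers \<mu> m_pos by (simp add: BtYG BtYB smult_add_distrib_vec[of _ d0] smult_smult_assoc)
  finally show ?thesis
    unfolding \<xi>_def .
qed

lemma ls_estimate_error:
  assumes \<mu>: "\<mu> \<in> carrier_vec d" and \<nu>: "\<nu> \<in> carrier_vec d0"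
  shows "(B *\<^sub>v \<nu>) \<bullet> \<mu> - (B *\<^sub>v \<nu>) \<bullet> ls_estimate D (delay_vec m d0 B \<sigma> \<mu> e)
    = - (\<Sum>t<m * d0. \<nu> $ \<sigma> t * e t) / real m"
proof -
  define \<xi> where "\<xi> = vec d0 (\<lambda>j. \<Sum>t | t < m * d0 \<and> \<sigma> t = j. e t)"
  have "(B *\<^sub>v \<nu>) \<bullet> ls_estimate D (delay_vec m d0 B \<sigma> \<mu> e)
      = \<nu> \<bullet> (transpose_mat B *\<^sub>v \<mu> + (1 / real m) \<cdot>\<^sub>v \<xi>)"
    unfolding \<xi>_def transpose_mult_ls_estimate[OF \<mu>, symmetric]
    by (rule scalar_prod_mult_mat_vec[OF carrier \<nu> ls_estimate_carrier])
  also have "\<dots> = (B *\<^sub>v \<nu>) \<bullet> \<mu> + (\<nu> \<bullet> \<xi>) / real m"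
    using \<mu> \<nu> carrier by (simp add: \<xi>_def scalar_prod_add_distrib[of _ d0] scalar_prod_mult_mat_vec)
  also have "\<nu> \<bullet> \<xi> = (\<Sum>j<d0. \<nu> $ j * (\<Sum>t | t < m * d0 \<and> \<sigma> t = j. e t))"
    unfolding \<xi>_def using \<nu> by (simp add: scalar_prod_def atLeast0LessThan)
  also have "\<dots> = (\<Sum>t<m * d0. \<nu> $ \<sigma> t * e t)"
    by (rule sum_mult_group_by[symmetric]) (rule epoch_schedule_less[OF schedule])
  finally show ?thesis
    by simp
qed

lemma ls_estimate_error_ge_imp_noise_ge:
  assumes basis: "is_basis_of d d0 B A" and "finite A" and "a \<in> A" and "\<mu> \<in> carrier_vec d"
    and "0 < d0"
    and ge: "coeff_bound d0 B A * r \<le> \<bar>a \<bullet> \<mu> - a \<bullet> ls_estimate D (delay_vec m d0 B \<sigma> \<mu> e)\<bar>"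
  shows "real m * r \<le> (\<Sum>j<d0. \<bar>\<Sum>t | t < m * d0 \<and> \<sigma> t = j. e t\<bar>)"
proof -
  define S where "S = coeff_bound d0 B A"
  define \<nu> where "\<nu> = coeffs d0 B a"
  have \<nu>: "\<nu> \<in> carrier_vec d0" "B *\<^sub>v \<nu> = a"
    unfolding \<nu>_def using is_basis_of_coeffs[OF basis \<open>a \<in> A\<close>] by simp_all
  have "S * r \<le> \<bar>\<Sum>t<m * d0. \<nu> $ \<sigma> t * e t\<bar> / m"
    using ge ls_estimate_error[OF \<open>\<mu> \<in> carrier_vec d\<close> \<nu>(1)] \<nu>(2) by (simp add: S_def)
  also have "\<dots> \<le> S * (\<Sum>j<d0. \<bar>\<Sum>t | t < m * d0 \<and> \<sigma> t = j. e t\<bar>) / m"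
    using abs_coeffs_le_coeff_bound[OF \<open>finite A\<close> \<open>a \<in> A\<close>] unfolding S_def \<nu>_def
    by (intro divide_right_mono abs_sum_le_sum_abs_group epoch_schedule_less[OF schedule]) auto
  finally have "S * (real m * r) \<le> S * (\<Sum>j<d0. \<bar>\<Sum>t | t < m * d0 \<and> \<sigma> t = j. e t\<bar>)"
    using m_pos by (simp add: pos_le_divide_eq ac_simps)
  moreover have "0 < S"
    using one_le_coeff_bound[OF basis \<open>finite A\<close> \<open>0 < d0\<close>] by (simp add: S_def)
  ultimately show ?thesis
    by simp
qed

end

section \<open>Sums of conditionally sub-Gaussian noise\<close>

lemma (in sigma_finite_subalgebra) nn_cond_exp_eq_real_cond_exp:
  assumes [measurable]: "g \<in> borel_measurable M" and "integrable M g" and "\<And>x. 0 \<le> g x"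
  shows "AE x in M. nn_cond_exp M F (\<lambda>x. ennreal (g x)) x = ennreal (real_cond_exp M F g x)"
proof -
  have "(\<integral>\<^sup>+ x. nn_cond_exp M F (\<lambda>x. ennreal (g x)) x \<partial>M) = (\<integral>\<^sup>+ x. ennreal (g x) \<partial>M)"
    using nn_cond_exp_intg[of "\<lambda>_. 1" "\<lambda>x. ennreal (g x)"] by simp
  also have "\<dots> < \<infinity>"
    using assms(2,3) by (simp add: integrable_iff_bounded)
  finally have "AE x in M. nn_cond_exp M F (\<lambda>x. ennreal (g x)) x \<noteq> \<infinity>"
    by (intro nn_integral_PInf_AE) auto
  moreover have "AE x in M. nn_cond_exp M F (\<lambda>x. ennreal (- g x)) x = 0"
  proof -
    have "(\<integral>\<^sup>+ x. nn_cond_exp M F (\<lambda>x. ennreal (- g x)) x \<partial>M) = (\<integral>\<^sup>+ x. ennreal (- g x) \<partial>M)"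
      using nn_cond_exp_intg[of "\<lambda>_. 1" "\<lambda>x. ennreal (- g x)"] by simp
    also have "\<dots> = 0" using assms(3) by (simp add: ennreal_neg)
    finally show ?thesis by (subst (asm) nn_integral_0_iff_AE) auto
  qed
  ultimately show ?thesis
    by eventually_elim (auto simp: real_cond_exp_def less_top)
qed

locale cond_subgaussian = prob_space M
  for M :: "'w measure" +
  fixes F :: "nat \<Rightarrow> 'w measure" and \<eta> :: "nat \<Rightarrow> 'w \<Rightarrow> real" and n :: nat and R :: real
  assumes subalgebra: "\<And>t. t < n \<Longrightarrow> subalgebra M (F t)"
    and adapted: "\<And>s t. s < t \<Longrightarrow> t < n \<Longrightarrow> \<eta> s \<in> borel_measurable (F t)"
    and random_variable: "\<And>t. t < n \<Longrightarrow> \<eta> t \<in> borel_measurable M"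
    and exp_integrable: "\<And>t \<alpha>. t < n \<Longrightarrow> integrable M (\<lambda>x. exp (\<alpha> * \<eta> t x))"
    and cond_mgf_le: "\<And>t \<alpha>. t < n \<Longrightarrow>
      AE x in M. real_cond_exp M (F t) (\<lambda>y. exp (\<alpha> * \<eta> t y)) x \<le> exp (\<alpha>\<^sup>2 * R\<^sup>2 / 2)"
begin

lemma nn_integral_exp_sum_le:
  "k \<le> n \<Longrightarrow> (\<integral>\<^sup>+x. exp (\<Sum>t<k. c t * \<eta> t x) \<partial>M) \<le> exp (R\<^sup>2 * (\<Sum>t<k. (c t)\<^sup>2) / 2)"
proof (induction k)
  case 0
  then show ?case by (simp add: emeasure_space_1)
next
  case (Suc k)
  then have k: "k < n" by simp
  interpret finite_measure_subalgebra M "F k"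
    by unfold_locales (rule subalgebra[OF k])
  define f where "f = (\<lambda>x. ennreal (exp (\<Sum>t<k. c t * \<eta> t x)))"
  define g where "g = (\<lambda>x. exp (c k * \<eta> k x))"
  have "(\<lambda>x. \<Sum>t<k. c t * \<eta> t x) \<in> borel_measurable (F k)"
    using adapted k by (intro borel_measurable_sum borel_measurable_times borel_measurable_const) auto
  then have [measurable]: "f \<in> borel_measurable (F k)"
    unfolding f_def by measurable
  have [measurable]: "g \<in> borel_measurable M"
    unfolding g_def using random_variable[OF k] by simp
  have "AE x in M. nn_cond_exp M (F k) (\<lambda>x. ennreal (g x)) x = real_cond_exp M (F k) g x"
    using exp_integrable[OF k] by (intro nn_cond_exp_eq_real_cond_exp) (auto simp: g_def)
  moreover have "AE x in M. real_cond_exp M (F k) g x \<le> exp (R\<^sup>2 * (c k)\<^sup>2 / 2)"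
    using cond_mgf_le[OF k, of "c k"] by (simp add: g_def power_mult_distrib mult.commute)
  ultimately have cond_g: "AE x in M. nn_cond_exp M (F k) (\<lambda>x. ennreal (g x)) x \<le> exp (R\<^sup>2 * (c k)\<^sup>2 / 2)"
    by eventually_elim (simp add: ennreal_leI)
  have "(\<integral>\<^sup>+x. exp (\<Sum>t<Suc k. c t * \<eta> t x) \<partial>M) = (\<integral>\<^sup>+x. f x * g x \<partial>M)"
    by (simp add: f_def g_def exp_add ennreal_mult)
  also have "\<dots> = (\<integral>\<^sup>+x. f x * nn_cond_exp M (F k) (\<lambda>x. ennreal (g x)) x \<partial>M)"
    by (simp add: nn_cond_exp_intg)
  also have "\<dots> \<le> (\<integral>\<^sup>+x. f x * exp (R\<^sup>2 * (c k)\<^sup>2 / 2) \<partial>M)"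
    using cond_g by (intro nn_integral_mono_AE) (auto elim!: eventually_mono intro: mult_left_mono)
  also have "\<dots> = (\<integral>\<^sup>+x. f x \<partial>M) * exp (R\<^sup>2 * (c k)\<^sup>2 / 2)"
    by (intro nn_integral_multc measurable_from_subalg[OF subalg]) simp
  also have "\<dots> \<le> ennreal (exp (R\<^sup>2 * (\<Sum>t<k. (c t)\<^sup>2) / 2)) * exp (R\<^sup>2 * (c k)\<^sup>2 / 2)"
    unfolding f_def using Suc by (intro mult_right_mono) auto
  also have "\<dots> = exp (R\<^sup>2 * (\<Sum>t<Suc k. (c t)\<^sup>2) / 2)"
    by (simp add: ennreal_mult[symmetric] exp_add[symmetric] add_divide_distrib algebra_simps)
  finally show ?case .
qed

lemma prob_sum_ge_le:
  assumes "0 < a" and "0 < R" and "0 < (\<Sum>t<n. (c t)\<^sup>2)"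
  shows "prob {x \<in> space M. a \<le> (\<Sum>t<n. c t * \<eta> t x)}
    \<le> exp (- a\<^sup>2 / (2 * R\<^sup>2 * (\<Sum>t<n. (c t)\<^sup>2)))"
proof -
  define v where "v = (\<Sum>t<n. (c t)\<^sup>2)"
  define s where "s = a / (R\<^sup>2 * v)"
  have "0 < v" "0 < s" using assms by (simp_all add: v_def s_def)
  have [measurable]: "(\<lambda>x. \<Sum>t<n. c t * \<eta> t x) \<in> borel_measurable M"
    using random_variable by (intro borel_measurable_sum borel_measurable_times borel_measurable_const) auto
  have "emeasure M {x \<in> space M. a \<le> (\<Sum>t<n. c t * \<eta> t x)}
      \<le> ennreal (exp (- s * a)) * (\<integral>\<^sup>+x\<in>space M. exp (s * (\<Sum>t<n. c t * \<eta> t x)) \<partial>M)"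
    using \<open>0 < s\<close> by (intro Chernoff_ineq_nn_integral_ge) auto
  also have "(\<integral>\<^sup>+x\<in>space M. exp (s * (\<Sum>t<n. c t * \<eta> t x)) \<partial>M)
      = (\<integral>\<^sup>+x. exp (\<Sum>t<n. (s * c t) * \<eta> t x) \<partial>M)"
    by (simp add: sum_distrib_left mult.assoc)
  also have "ennreal (exp (- s * a)) * \<dots> \<le> ennreal (exp (- s * a)) * exp (R\<^sup>2 * (\<Sum>t<n. (s * c t)\<^sup>2) / 2)"
    by (intro mult_left_mono nn_integral_exp_sum_le) simp_all
  also have "ennreal (exp (- s * a)) * ennreal (exp (R\<^sup>2 * (\<Sum>t<n. (s * c t)\<^sup>2) / 2))
      = exp (- a\<^sup>2 / (2 * R\<^sup>2 * v))"
  proof -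
    have "(\<Sum>t<n. (s * c t)\<^sup>2) = s\<^sup>2 * v"
      by (simp add: v_def power_mult_distrib sum_distrib_left)
    moreover have "- s * a + R\<^sup>2 * (s\<^sup>2 * v) / 2 = - a\<^sup>2 / (2 * R\<^sup>2 * v)"
      using \<open>0 < v\<close> assms(2) by (simp add: s_def field_simps power2_eq_square)
    ultimately have "- s * a + R\<^sup>2 * (\<Sum>t<n. (s * c t)\<^sup>2) / 2 = - a\<^sup>2 / (2 * R\<^sup>2 * v)"
      by simp
    then show ?thesis by (simp flip: ennreal_mult exp_add)
  qed
  finally show ?thesis
    by (simp add: v_def emeasure_eq_measure)
qed

lemma borel_measurable_sum_abs_group:
  "(\<lambda>x. \<Sum>j<k. \<bar>\<Sum>t | t < n \<and> \<sigma> t = j. \<eta> t x\<bar>) \<in> borel_measurable M"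
  using random_variable by (intro borel_measurable_sum borel_measurable_abs) auto

lemma prob_sign_sum_ge_le:
  fixes \<sigma> :: "nat \<Rightarrow> nat"
  assumes "s \<in> {..<k} \<rightarrow>\<^sub>E {-1, 1}" and "\<And>t. t < n \<Longrightarrow> \<sigma> t < k"
    and "0 < n" and "0 < R" and "0 < a"
  shows "prob {x \<in> space M. a \<le> (\<Sum>t<n. s (\<sigma> t) * \<eta> t x)} \<le> exp (- a\<^sup>2 / (2 * R\<^sup>2 * n))"
proof -
  have "(s (\<sigma> t))\<^sup>2 = 1" if "t < n" for t
    using assms(1) assms(2)[OF that] by (auto dest!: PiE_mem)
  then have "(\<Sum>t<n. (s (\<sigma> t))\<^sup>2) = n"
    by simp
  then show ?thesis
    using prob_sum_ge_le[of a "\<lambda>t. s (\<sigma> t)"] assms(3-5) by simp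
qed

lemma prob_sum_abs_group_ge:
  fixes \<sigma> :: "nat \<Rightarrow> nat"
  assumes \<sigma>_less: "\<And>t. t < n \<Longrightarrow> \<sigma> t < k" and "0 < n" and "0 < R" and "0 < a"
  shows "prob {x \<in> space M. a \<le> (\<Sum>j<k. \<bar>\<Sum>t | t < n \<and> \<sigma> t = j. \<eta> t x\<bar>)}
    \<le> 2 ^ k * exp (- a\<^sup>2 / (2 * R\<^sup>2 * n))"
proof -
  define signs where "signs = {..<k} \<rightarrow>\<^sub>E {-1, 1 :: real}"
  define E where "E s = {x \<in> space M. a \<le> (\<Sum>t<n. s (\<sigma> t) * \<eta> t x)}" for s
  have E_sets: "E s \<in> sets M" for s
  proof -
    have "(\<lambda>x. \<Sum>t<n. s (\<sigma> t) * \<eta> t x) \<in> borel_measurable M"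
      using random_variable by (intro borel_measurable_sum borel_measurable_times borel_measurable_const) auto
    then show ?thesis
      unfolding E_def by measurable
  qed
  have "{x \<in> space M. a \<le> (\<Sum>j<k. \<bar>\<Sum>t | t < n \<and> \<sigma> t = j. \<eta> t x\<bar>)} \<subseteq> (\<Union>s\<in>signs. E s)"
  proof
    fix x assume x: "x \<in> {x \<in> space M. a \<le> (\<Sum>j<k. \<bar>\<Sum>t | t < n \<and> \<sigma> t = j. \<eta> t x\<bar>)}"
    obtain s where "s \<in> signs"
      and "(\<Sum>j<k. \<bar>\<Sum>t | t < n \<and> \<sigma> t = j. \<eta> t x\<bar>) = (\<Sum>t<n. s (\<sigma> t) * \<eta> t x)"
      unfolding signs_def by (rule sum_abs_group_eq_sign_sum[OF \<sigma>_less, where e = "\<lambda>t. \<eta> t x"])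
    with x show "x \<in> (\<Union>s\<in>signs. E s)"
      by (auto simp: E_def)
  qed
  then have "prob {x \<in> space M. a \<le> (\<Sum>j<k. \<bar>\<Sum>t | t < n \<and> \<sigma> t = j. \<eta> t x\<bar>)}
      \<le> prob (\<Union>s\<in>signs. E s)"
    using E_sets unfolding signs_def by (intro finite_measure_mono sets.finite_UN finite_PiE) auto
  also have "\<dots> \<le> (\<Sum>s\<in>signs. prob (E s))"
    using E_sets unfolding signs_def by (intro measure_UNION_le finite_PiE) auto
  also have "\<dots> \<le> (\<Sum>s\<in>signs. exp (- a\<^sup>2 / (2 * R\<^sup>2 * n)))"
    unfolding E_def signs_def using assms by (intro sum_mono prob_sign_sum_ge_le) auto
  also have "\<dots> = 2 ^ k * exp (- a\<^sup>2 / (2 * R\<^sup>2 * n))"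
    by (simp add: signs_def card_PiE)
  finally show ?thesis .
qed

end

section \<open>The natural filtration of the noise\<close>

lemma space_noise_filt [simp]: "space (noise_filt M \<eta> t) = space M"
  unfolding noise_filt_def by (simp add: space_measure_of_conv)

lemma sets_noise_filt:
  "sets (noise_filt M \<eta> t) = sigma_sets (space M) (\<Union>s<t. {\<eta> s -` U \<inter> space M | U. U \<in> sets borel})"
  unfolding noise_filt_def by (rule sets_measure_of) auto

lemma subalgebra_noise_filt:
  assumes "\<And>s. s < t \<Longrightarrow> \<eta> s \<in> borel_measurable M"
  shows "subalgebra M (noise_filt M \<eta> t)"
  unfolding subalgebra_def sets_noise_filt
  using assms by (auto intro!: sets.sigma_sets_subset measurable_sets)

lemma measurable_noise_filt:
  assumes "s < t"
  shows "\<eta> s \<in> borel_measurable (noise_filt M \<eta> t)"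
proof (rule measurableI)
  fix U :: "real set" assume "U \<in> sets borel"
  then show "\<eta> s -` U \<inter> space (noise_filt M \<eta> t) \<in> sets (noise_filt M \<eta> t)"
    unfolding sets_noise_filt using assms by auto
qed simp

lemma cond_subgaussian_noise_filt:
  assumes "prob_space M"
    and "\<And>t. t < n \<Longrightarrow> \<eta> t \<in> borel_measurable M"
    and "\<And>t \<alpha>. t < n \<Longrightarrow> integrable M (\<lambda>x. exp (\<alpha> * \<eta> t x))"
    and "\<And>t \<alpha>. t < n \<Longrightarrow>
      AE x in M. real_cond_exp M (noise_filt M \<eta> t) (\<lambda>y. exp (\<alpha> * \<eta> t y)) x \<le> exp (\<alpha>\<^sup>2 * R\<^sup>2 / 2)"
  shows "cond_subgaussian M (noise_filt M \<eta>) \<eta> n R"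
  unfolding cond_subgaussian_def cond_subgaussian_axioms_def
  using assms by (auto intro: subalgebra_noise_filt measurable_noise_filt)

lemma two_pow_mult_exp_le:
  fixes \<delta> :: real
  assumes "0 < \<delta>" and "\<delta> < 1"
  shows "2 ^ k * exp (- (16 * ln 6 * k + 16 * ln (1 / \<delta>))) \<le> \<delta>"
proof -
  have "(2::real) ^ k = exp (k * ln 2)"
    by (simp add: exp_of_nat_mult)
  moreover have "ln 2 \<le> 16 * ln (6::real)"
    using ln_le_cancel_iff[of 2 6] ln_ge_zero[of 6] by linarith
  then have "k * ln 2 \<le> 16 * ln (6::real) * k"
    by (simp add: mult.commute mult_left_mono)
  moreover have "ln (1 / \<delta>) = - ln \<delta>" and "ln \<delta> \<le> 0"
    using assms by (simp_all add: ln_div)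
  ultimately have "2 ^ k * exp (- (16 * ln 6 * k + 16 * ln (1 / \<delta>))) \<le> exp (ln \<delta>)"
    by (simp flip: exp_add)
  then show ?thesis
    using assms by simp
qed

theorem theorem6p2:
  fixes M :: "'w measure" and \<eta> :: "nat \<Rightarrow> 'w \<Rightarrow> real"
    and d d0 m :: nat and A :: "real vec set" and B :: "real mat"
    and \<sigma> :: "nat \<Rightarrow> nat" and \<mu> :: "real vec" and R \<delta> :: real
  assumes "prob_space M"
    and "A \<subseteq> path_vecs d"
    and "0 < d0" and "d0 < d"
    and "is_basis_of d d0 B A"
    and "\<mu> \<in> carrier_vec d"
    and "0 < R"
    and "0 < m"
    and "epoch_schedule m d0 \<sigma>"
    and "\<And>t. t < m*d0 \<Longrightarrow> \<eta> t \<in> borel_measurable M"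
    and "\<And>t. t < m*d0 \<Longrightarrow> integrable M (\<eta> t)"
    and "\<And>t. t < m*d0 \<Longrightarrow>
           AE x in M. real_cond_exp M (noise_filt M \<eta> t) (\<eta> t) x = 0"
    and "\<And>t \<alpha>. t < m*d0 \<Longrightarrow> integrable M (\<lambda>x. exp (\<alpha> * \<eta> t x))"
    and "\<And>t \<alpha>. t < m*d0 \<Longrightarrow>
           AE x in M. real_cond_exp M (noise_filt M \<eta> t) (\<lambda>y. exp (\<alpha> * \<eta> t y)) x
                       \<le> exp (\<alpha>^2 * R^2 / 2)"
    and "0 < \<delta>" and "\<delta> < 1"
  shows "measure M {x \<in> space M. \<exists>a\<in>A.
           \<bar>scalar_prod a \<mu>
             - scalar_prod a (ls_estimate (design_mat d m d0 B \<sigma>)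
                                 (delay_vec m d0 B \<sigma> \<mu> (\<lambda>t. \<eta> t x)))\<bar>
           \<ge> coeff_bound d0 B A * R *
              sqrt ((32 * ln 6 * real d0^2 + 32 * real d0 * ln (1/\<delta>)) / real m)}
         \<le> \<delta>"
proof -
  interpret cond_subgaussian M "noise_filt M \<eta>" \<eta> "m * d0" R
    using assms(1,10,13,14) by (rule cond_subgaussian_noise_filt)
  interpret epoch_design B d d0 m \<sigma>
    using is_basis_of_full_column_rank[OF assms(5)] assms(8,9)
    by (simp add: epoch_design_def epoch_design_axioms_def)
  have "finite A"
    using finite_subset[OF assms(2) finite_path_vecs] .
  define c where "c = 32 * ln 6 * real d0^2 + 32 * real d0 * ln (1/\<delta>)"
  define \<tau> where "\<tau> = real m * (R * sqrt (c / real m))"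
  have "0 < c"
    unfolding c_def using assms(3,15,16) by (simp add: add_pos_nonneg)
  have exponent: "\<tau>\<^sup>2 / (2 * R\<^sup>2 * (m * d0)) = 16 * ln 6 * d0 + 16 * ln (1 / \<delta>)"
    using assms(3,7,8) \<open>0 < c\<close> unfolding \<tau>_def c_def
    by (simp add: power_mult_distrib field_simps power2_eq_square)
  let ?noise = "\<lambda>x. \<Sum>j<d0. \<bar>\<Sum>t | t < m * d0 \<and> \<sigma> t = j. \<eta> t x\<bar>"
  have "measure M {x \<in> space M. \<exists>a\<in>A.
           \<bar>a \<bullet> \<mu> - a \<bullet> ls_estimate D (delay_vec m d0 B \<sigma> \<mu> (\<lambda>t. \<eta> t x))\<bar>
           \<ge> coeff_bound d0 B A * (R * sqrt (c / real m))}
      \<le> prob {x \<in> space M. \<tau> \<le> ?noise x}"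
    using ls_estimate_error_ge_imp_noise_ge[OF assms(5) \<open>finite A\<close> _ assms(6,3)]
      borel_measurable_sum_abs_group[where k = d0 and \<sigma> = \<sigma>]
    unfolding \<tau>_def by (intro finite_measure_mono) (auto simp: borel_measurable_iff_ge)
  also have "\<dots> \<le> 2 ^ d0 * exp (- \<tau>\<^sup>2 / (2 * R\<^sup>2 * (m * d0)))"
    using assms(3,7,8) \<open>0 < c\<close> unfolding \<tau>_def
    by (intro prob_sum_abs_group_ge epoch_schedule_less[OF schedule]) auto
  also have "\<dots> \<le> \<delta>"
    using two_pow_mult_exp_le[OF assms(15,16), of d0] exponent by simp
  finally show ?thesis
    unfolding c_def by (simp add: mult.assoc)
qed

end
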